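(* The least fixed point $(T_\infty,P_\infty)$ of $\Gamma_{\mathscr{TP}}$ (the stage at which the sequence $(T_\alpha,P_\alpha)$ stabilizes) is consistent, i.e. $T_\infty^+\cap T_\infty^-=\emptyset$ and $P_\infty^+\cap P_\infty^-=\emptyset$, and (hence) sound, i.e. for every $\mathcal L$-sentence $\varphi$, either $(\mathbb N,T_\infty,P_\infty)\not\models_{SK}\varphi\vee\neg\varphi$ or $(\mathbb N,T_\infty,P_\infty)\not\models_{SK}\mathscr P(\varphi)$.
   Context: Language. Let $\mathcal L_{\mathbb N}$ be the language of first-order Peano arithmetic and $\mathcal L=\mathcal L_{\mathbb N}\cup\{\mathrm T,\mathrm P\}$ with unary predicates $\mathrm T,\mathrm P$. $\mathcal L$-formulas are in Tait style: literals are $s=t$, $s\neq t$, $\mathrm Tt$, $\neg\mathrm Tt$, $\mathrm Pt$, $\neg\mathrm Pt$; formulas are built from literals by $\wedge,\vee,\forall,\exists$; negation of an arbitrary formula is defined by De Morgan dualities with $\neg\neg\varphi:=\varphi$. A standard Gödel numbering is fixed; $\#e$ is the code of $e$, $\ulcorner e\urcorner$ the numeral of $\#e$, $\mathrm{val}(t)$ the value of a closed term $t$, $\dot\neg$ the primitive recursive function with $\dot\neg(\#\varphi)=\#\neg\varphi$; $\mathrm T\varphi,\mathrm P\varphi$ abbreviate $\mathrm T\ulcorner\varphi\urcorner,\mathrm P\ulcorner\varphi\urcorner$. Semantics. A partial model is $(\mathbb N,T,P)$ with $\mathbb N$ the standard model and $T=(T^+,T^-)$, $P=(P^+,P^-)$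 pairs of subsets of $\omega$. Strong Kleene satisfaction $\models_{SK}$: arithmetic literals evaluated in $\mathbb N$; $\mathrm Tt$ satisfied iff $\mathrm{val}(t)\in T^+$, $\neg\mathrm Tt$ iff $\mathrm{val}(t)\in T^-$, likewise for $\mathrm P$ with $P^\pm$; conjunction iff both, disjunction iff at least one, $\forall x\varphi(x)$ iff all numeral instances, $\exists x\varphi(x)$ iff some numeral instance. Base paradoxicality. $\mathrm{PA}[\mathrm{SK}]$ is the two-sided sequent calculus for Strong Kleene logic with identity in $\mathcal L$ (initial sequents $\varphi\Rightarrow\varphi$, cut, weakening, the rule from $\Gamma\Rightarrow\Delta,\varphi$ infer $\neg\varphi,\Gamma\Rightarrow\Delta$, usual rules for $\wedge,\vee,\forall,\exists$, reflexivity $\Rightarrow t=t$, replacement from $\Gamma\Rightarrow\Delta,\varphi(t)$ infer $\Gamma\Rightarrow\Delta,s\neq t,\varphi(s)$) plus the initial sequents of Peano arithmetic and the induction rule for all $\mathcal L$-formulas. A sentence $\varphi$ is base paradoxical iff $\mathrm{PA}[\mathrm{SK}]$ derives $\varphi\Leftrightarrow\neg\mathrm T\varphi$ and $\neg\varphi\Leftrightarrow\mathrm T\varphi$ ($\Leftrightarrow$ meaning both sequents). $B(x)$ is an $\mathcal L_{\mathbb N}$-formula defining in $\mathbb N$ the set of codes of base paradoxical sentences, and $\Pi(x):=B(x)\vee B(\dot\neg x)$. Jump and sequence. Let $\mathscr P(x)$ be the $\mathcal L$-formula which is the disjunction of: (1) $x$ codes a sentence and $\Pi(x)$; (2) $x$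 codes a sentence $\mathrm Tt$ ($t$ a closed term) and $\mathrm P(\mathrm{val}(t))$; (3) $x$ codes a sentence $\neg\mathrm Tt$ and $\mathrm P(\mathrm{val}(t))$; (4) $x$ codes a sentence $\psi\wedge\theta$ and $(\mathrm P\psi\wedge\mathrm P\theta)\vee(\mathrm T\psi\wedge\mathrm P\theta)\vee(\mathrm T\theta\wedge\mathrm P\psi)$; (5) $x$ codes a sentence $\psi\vee\theta$ and $(\mathrm P\psi\wedge\mathrm P\theta)\vee(\neg\mathrm T\psi\wedge\mathrm P\theta)\vee(\neg\mathrm T\theta\wedge\mathrm P\psi)$; (6) $x$ codes a sentence $\forall v\psi$ and $\exists y\,\mathrm P\psi(\dot y)\wedge\forall y(\mathrm P\psi(\dot y)\vee\mathrm T\psi(\dot y))$; (7) $x$ codes a sentence $\exists v\psi$ and $\exists y\,\mathrm P\psi(\dot y)\wedge\forall y(\mathrm P\psi(\dot y)\vee\neg\mathrm T\psi(\dot y))$; here $\psi(\dot y)$ is the code of the result of substituting the numeral of $y$ for $v$. Write $\mathscr P(\varphi)$ for $\mathscr P(\ulcorner\varphi\urcorner)$. Define $\Gamma_{\mathscr{TP}}(T,P)=\big((\{\#\varphi:(\mathbb N,T,P)\models_{SK}\varphi\},\{\#\varphi:(\mathbb N,T,P)\models_{SK}\neg\varphi\}),(\{\#\varphi:(\mathbb N,T,P)\models_{SK}\mathscr P(\varphi)\},\{\#\varphi:(\mathbb N,T,P)\models_{SK}\varphi\vee\neg\varphi\})\big)$, $\varphi$ ranging over $\mathcal L$-sentences.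 Define $(T_0,P_0)=((\emptyset,\emptyset),(\emptyset,\emptyset))$, $(T_{\beta+1},P_{\beta+1})=\Gamma_{\mathscr{TP}}(T_\beta,P_\beta)$, $(T_\lambda,P_\lambda)=\bigcup_{\beta<\lambda}(T_\beta,P_\beta)$ (componentwise union) for limit $\lambda$. This sequence reaches a fixed point $(T_\infty,P_\infty)=\Gamma_{\mathscr{TP}}(T_\infty,P_\infty)$. *)

theory Defs
  imports Main "HOL-Library.Product_Order"
begin

section \<open>Syntax of L = L_N + {T, P} (locally nameless, Tait style)\<close>

text \<open>Terms of the language of PA: free variables Fv, bound variables Bv (de Bruijn
indices), 0, successor, addition, multiplication.\<close>
datatype tm = Fv nat | Bv nat | Zero | Sc tm | Pl tm tm | Tm tm tm

text \<open>Tait-style formulas: literals, conjunction, disjunction, quantifiers.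
Tr = T, NTr = not T, Pr = P, NPr = not P.\<close>
datatype fm = Eq tm tm | Neq tm tm | Tr tm | NTr tm | Pr tm | NPr tm
  | Conj fm fm | Disj fm fm | All fm | Ex fm

primrec neg :: "fm \<Rightarrow> fm" where
  "neg (Eq s t) = Neq s t"
| "neg (Neq s t) = Eq s t"
| "neg (Tr t) = NTr t"
| "neg (NTr t) = Tr t"
| "neg (Pr t) = NPr t"
| "neg (NPr t) = Pr t"
| "neg (Conj a b) = Disj (neg a) (neg b)"
| "neg (Disj a b) = Conj (neg a) (neg b)"
| "neg (All a) = Ex (neg a)"
| "neg (Ex a) = All (neg a)"

primrec openT :: "nat \<Rightarrow> tm \<Rightarrow> tm \<Rightarrow> tm" where
  "openT k u (Fv x) = Fv x"
| "openT k u (Bv i) = (if i = k then u else Bv i)"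
| "openT k u Zero = Zero"
| "openT k u (Sc t) = Sc (openT k u t)"
| "openT k u (Pl s t) = Pl (openT k u s) (openT k u t)"
| "openT k u (Tm s t) = Tm (openT k u s) (openT k u t)"

primrec openF :: "nat \<Rightarrow> tm \<Rightarrow> fm \<Rightarrow> fm" where
  "openF k u (Eq s t) = Eq (openT k u s) (openT k u t)"
| "openF k u (Neq s t) = Neq (openT k u s) (openT k u t)"
| "openF k u (Tr t) = Tr (openT k u t)"
| "openF k u (NTr t) = NTr (openT k u t)"
| "openF k u (Pr t) = Pr (openT k u t)"
| "openF k u (NPr t) = NPr (openT k u t)"
| "openF k u (Conj a b) = Conj (openF k u a) (openF k u b)"
| "openF k u (Disj a b) = Disj (openF k u a) (openF k u b)"
| "openF k u (All a) = All (openF (Suc k) u a)"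
| "openF k u (Ex a) = Ex (openF (Suc k) u a)"

primrec lcT :: "nat \<Rightarrow> tm \<Rightarrow> bool" where
  "lcT n (Fv x) = True"
| "lcT n (Bv i) = (i < n)"
| "lcT n Zero = True"
| "lcT n (Sc t) = lcT n t"
| "lcT n (Pl s t) = (lcT n s \<and> lcT n t)"
| "lcT n (Tm s t) = (lcT n s \<and> lcT n t)"

primrec lcF :: "nat \<Rightarrow> fm \<Rightarrow> bool" where
  "lcF n (Eq s t) = (lcT n s \<and> lcT n t)"
| "lcF n (Neq s t) = (lcT n s \<and> lcT n t)"
| "lcF n (Tr t) = lcT n t"
| "lcF n (NTr t) = lcT n t"
| "lcF n (Pr t) = lcT n t"
| "lcF n (NPr t) = lcT n t"
| "lcF n (Conj a b) = (lcF n a \<and> lcF n b)"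
| "lcF n (Disj a b) = (lcF n a \<and> lcF n b)"
| "lcF n (All a) = lcF (Suc n) a"
| "lcF n (Ex a) = lcF (Suc n) a"

primrec fvT :: "tm \<Rightarrow> nat set" where
  "fvT (Fv x) = {x}"
| "fvT (Bv i) = {}"
| "fvT Zero = {}"
| "fvT (Sc t) = fvT t"
| "fvT (Pl s t) = fvT s \<union> fvT t"
| "fvT (Tm s t) = fvT s \<union> fvT t"

primrec fvF :: "fm \<Rightarrow> nat set" where
  "fvF (Eq s t) = fvT s \<union> fvT t"
| "fvF (Neq s t) = fvT s \<union> fvT t"
| "fvF (Tr t) = fvT t"
| "fvF (NTr t) = fvT t"
| "fvF (Pr t) = fvT t"
| "fvF (NPr t) = fvT t"
| "fvF (Conj a b) = fvF a \<union> fvF b"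
| "fvF (Disj a b) = fvF a \<union> fvF b"
| "fvF (All a) = fvF a"
| "fvF (Ex a) = fvF a"

definition closed_tm :: "tm \<Rightarrow> bool" where
  "closed_tm t \<longleftrightarrow> lcT 0 t \<and> fvT t = {}"

definition sentence :: "fm \<Rightarrow> bool" where
  "sentence \<phi> \<longleftrightarrow> lcF 0 \<phi> \<and> fvF \<phi> = {}"

primrec num :: "nat \<Rightarrow> tm" where
  "num 0 = Zero"
| "num (Suc n) = Sc (num n)"

primrec val :: "tm \<Rightarrow> nat" where
  "val (Fv x) = 0"
| "val (Bv i) = 0"
| "val Zero = 0"
| "val (Sc t) = Suc (val t)"
| "val (Pl s t) = val s + val t"
| "val (Tm s t) = val s * val t"

text \<open>A partial model is given by ((T+, T-), (P+, P-)).\<close>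
type_synonym pmodel = "(nat set \<times> nat set) \<times> (nat set \<times> nat set)"

primrec fsize :: "fm \<Rightarrow> nat" where
  "fsize (Eq s t) = 1"
| "fsize (Neq s t) = 1"
| "fsize (Tr t) = 1"
| "fsize (NTr t) = 1"
| "fsize (Pr t) = 1"
| "fsize (NPr t) = 1"
| "fsize (Conj a b) = Suc (fsize a + fsize b)"
| "fsize (Disj a b) = Suc (fsize a + fsize b)"
| "fsize (All a) = Suc (fsize a)"
| "fsize (Ex a) = Suc (fsize a)"

lemma fsize_openF [simp]: "fsize (openF k u \<phi>) = fsize \<phi>"
  by (induction \<phi> arbitrary: k) auto

function sat :: "pmodel \<Rightarrow> fm \<Rightarrow> bool" where
  "sat M (Eq s t) = (val s = val t)"
| "sat M (Neq s t) = (val s \<noteq> val t)"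
| "sat M (Tr t) = (val t \<in> fst (fst M))"
| "sat M (NTr t) = (val t \<in> snd (fst M))"
| "sat M (Pr t) = (val t \<in> fst (snd M))"
| "sat M (NPr t) = (val t \<in> snd (snd M))"
| "sat M (Conj a b) = (sat M a \<and> sat M b)"
| "sat M (Disj a b) = (sat M a \<or> sat M b)"
| "sat M (All a) = (\<forall>n. sat M (openF 0 (num n) a))"
| "sat M (Ex a) = (\<exists>n. sat M (openF 0 (num n) a))"
  by pat_completeness auto
termination
  by (relation "measure (\<lambda>(M, \<phi>). fsize \<phi>)") auto

definition fvs :: "fm set \<Rightarrow> nat set" where
  "fvs S = (\<Union>\<phi>\<in>S. fvF \<phi>)"

definition lcs :: "fm set \<Rightarrow> bool" where
  "lcs S \<longleftrightarrow> (\<forall>\<phi>\<in>S. lcF 0 \<phi>)"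

text \<open>deriv G D: the sequent G \<Rightarrow> D is derivable in PA[SK]. Sequents are finite sets
(exchange and contraction are built in). A formula \<phi>(x) with a distinguished
variable x is represented by a body \<phi> with bound index 0; \<phi>(t) is openF 0 t \<phi>.\<close>
inductive deriv :: "fm set \<Rightarrow> fm set \<Rightarrow> bool" where
  ax: "lcF 0 \<phi> \<Longrightarrow> deriv {\<phi>} {\<phi>}"
| weak: "deriv G D \<Longrightarrow> G \<subseteq> G' \<Longrightarrow> D \<subseteq> D' \<Longrightarrow> finite G' \<Longrightarrow> finite D'
          \<Longrightarrow> lcs G' \<Longrightarrow> lcs D' \<Longrightarrow> deriv G' D'"
| cut: "deriv G (insert \<phi> D) \<Longrightarrow> deriv (insert \<phi> G) D \<Longrightarrow> deriv G D"
| negl: "deriv G (insert \<phi> D) \<Longrightarrow> deriv (insert (neg \<phi>) G) D"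
| conjl1: "deriv (insert a G) D \<Longrightarrow> lcF 0 b \<Longrightarrow> deriv (insert (Conj a b) G) D"
| conjl2: "deriv (insert b G) D \<Longrightarrow> lcF 0 a \<Longrightarrow> deriv (insert (Conj a b) G) D"
| conjr: "deriv G (insert a D) \<Longrightarrow> deriv G (insert b D) \<Longrightarrow> deriv G (insert (Conj a b) D)"
| disjl: "deriv (insert a G) D \<Longrightarrow> deriv (insert b G) D \<Longrightarrow> deriv (insert (Disj a b) G) D"
| disjr1: "deriv G (insert a D) \<Longrightarrow> lcF 0 b \<Longrightarrow> deriv G (insert (Disj a b) D)"
| disjr2: "deriv G (insert b D) \<Longrightarrow> lcF 0 a \<Longrightarrow> deriv G (insert (Disj a b) D)"
| alll: "deriv (insert (openF 0 t \<phi>) G) D \<Longrightarrow> lcT 0 t \<Longrightarrow> lcF 1 \<phi>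
          \<Longrightarrow> deriv (insert (All \<phi>) G) D"
| allr: "deriv G (insert (openF 0 (Fv x) \<phi>) D) \<Longrightarrow> x \<notin> fvF \<phi> \<Longrightarrow> x \<notin> fvs G \<Longrightarrow> x \<notin> fvs D
          \<Longrightarrow> deriv G (insert (All \<phi>) D)"
| exl: "deriv (insert (openF 0 (Fv x) \<phi>) G) D \<Longrightarrow> x \<notin> fvF \<phi> \<Longrightarrow> x \<notin> fvs G \<Longrightarrow> x \<notin> fvs D
          \<Longrightarrow> deriv (insert (Ex \<phi>) G) D"
| exr: "deriv G (insert (openF 0 t \<phi>) D) \<Longrightarrow> lcT 0 t \<Longrightarrow> lcF 1 \<phi>
          \<Longrightarrow> deriv G (insert (Ex \<phi>) D)"
| refl: "lcT 0 t \<Longrightarrow> deriv {} {Eq t t}"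
| repl: "deriv G (insert (openF 0 t \<phi>) D) \<Longrightarrow> lcT 0 s \<Longrightarrow> lcF 1 \<phi>
          \<Longrightarrow> deriv G (insert (Neq s t) (insert (openF 0 s \<phi>) D))"
| pa_sc0: "lcT 0 s \<Longrightarrow> deriv {} {Neq (Sc s) Zero}"
| pa_scinj: "lcT 0 s \<Longrightarrow> lcT 0 t \<Longrightarrow> deriv {Eq (Sc s) (Sc t)} {Eq s t}"
| pa_pl0: "lcT 0 s \<Longrightarrow> deriv {} {Eq (Pl s Zero) s}"
| pa_plsc: "lcT 0 s \<Longrightarrow> lcT 0 t \<Longrightarrow> deriv {} {Eq (Pl s (Sc t)) (Sc (Pl s t))}"
| pa_tm0: "lcT 0 s \<Longrightarrow> deriv {} {Eq (Tm s Zero) Zero}"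
| pa_tmsc: "lcT 0 s \<Longrightarrow> lcT 0 t \<Longrightarrow> deriv {} {Eq (Tm s (Sc t)) (Pl (Tm s t) s)}"
| pa_lem: "lcT 0 s \<Longrightarrow> lcT 0 t \<Longrightarrow> deriv {} {Eq s t, Neq s t}"
| ind: "deriv (insert (openF 0 (Fv x) \<phi>) G) (insert (openF 0 (Sc (Fv x)) \<phi>) D)
          \<Longrightarrow> x \<notin> fvF \<phi> \<Longrightarrow> x \<notin> fvs G \<Longrightarrow> x \<notin> fvs D \<Longrightarrow> lcT 0 t
          \<Longrightarrow> deriv (insert (openF 0 Zero \<phi>) G) (insert (openF 0 t \<phi>) D)"

text \<open>gn is the (fixed) Goedel numbering; T\<phi> abbreviates Tr (num (gn \<phi>)).\<close>
definition base_paradoxical :: "(fm \<Rightarrow> nat) \<Rightarrow> fm \<Rightarrow> bool" where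
  "base_paradoxical gn \<phi> \<longleftrightarrow> sentence \<phi>
     \<and> deriv {\<phi>} {NTr (num (gn \<phi>))} \<and> deriv {NTr (num (gn \<phi>))} {\<phi>}
     \<and> deriv {neg \<phi>} {Tr (num (gn \<phi>))} \<and> deriv {Tr (num (gn \<phi>))} {neg \<phi>}"

text \<open>satP gn M \<phi>: (N,T,P) satisfies (Strong Kleene) the L-formula \<P>(\<ulcorner>\<phi>\<urcorner>), written
out clause by clause. Arithmetical parts (coding facts and \<Pi>) are evaluated in N;
\<Pi>(#\<phi>) holds iff \<phi> or \<not>\<phi> is base paradoxical.\<close>
definition satP :: "(fm \<Rightarrow> nat) \<Rightarrow> pmodel \<Rightarrow> fm \<Rightarrow> bool" where
  "satP gn M \<phi> \<longleftrightarrow> sentence \<phi> \<and>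
    (let Tp = fst (fst M); Tn = snd (fst M); Pp = fst (snd M) in
      (base_paradoxical gn \<phi> \<or> base_paradoxical gn (neg \<phi>))
    \<or> (\<exists>t. \<phi> = Tr t \<and> val t \<in> Pp)
    \<or> (\<exists>t. \<phi> = NTr t \<and> val t \<in> Pp)
    \<or> (\<exists>a b. \<phi> = Conj a b \<and>
         ((gn a \<in> Pp \<and> gn b \<in> Pp) \<or> (gn a \<in> Tp \<and> gn b \<in> Pp) \<or> (gn b \<in> Tp \<and> gn a \<in> Pp)))
    \<or> (\<exists>a b. \<phi> = Disj a b \<and>
         ((gn a \<in> Pp \<and> gn b \<in> Pp) \<or> (gn a \<in> Tn \<and> gn b \<in> Pp) \<or> (gn b \<in> Tn \<and> gn a \<in> Pp)))
    \<or> (\<exists>a. \<phi> = All a \<and> (\<exists>y. gn (openF 0 (num y) a) \<in> Pp)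
         \<and> (\<forall>y. gn (openF 0 (num y) a) \<in> Pp \<or> gn (openF 0 (num y) a) \<in> Tp))
    \<or> (\<exists>a. \<phi> = Ex a \<and> (\<exists>y. gn (openF 0 (num y) a) \<in> Pp)
         \<and> (\<forall>y. gn (openF 0 (num y) a) \<in> Pp \<or> gn (openF 0 (num y) a) \<in> Tn)))"

definition codes :: "(fm \<Rightarrow> nat) \<Rightarrow> (fm \<Rightarrow> bool) \<Rightarrow> nat set" where
  "codes gn Q = {gn \<phi> | \<phi>. sentence \<phi> \<and> Q \<phi>}"

definition GammaTP :: "(fm \<Rightarrow> nat) \<Rightarrow> pmodel \<Rightarrow> pmodel" where
  "GammaTP gn M =
     ((codes gn (\<lambda>\<phi>. sat M \<phi>), codes gn (\<lambda>\<phi>. sat M (neg \<phi>))),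
      (codes gn (\<lambda>\<phi>. satP gn M \<phi>), codes gn (\<lambda>\<phi>. sat M (Disj \<phi> (neg \<phi>)))))"

end

(* Call a partial model coherent if it is consistent, the positive extension of P is
   disjoint from both extensions of T, and no base paradoxical sentence lies in either
   extension of T. Every stage of the construction is coherent. The crux is that a sentence
   put into P at some stage stays undecided at every later coherent stage Z, which is shown
   by an inner induction over the stages W <= Z: each clause of the jump puts a compound
   into P only if its components are in P at W (hence undecided in Z) or in T at W with the
   polarity that cannot settle the compound in Z; base paradoxical sentences are undecided
   in every coherent model because PA[SK] is sound for consistent partial models. At the
   fixed point the negative extension of P consists of the decided sentences, so soundness
   is consistency of P. *)

theory Submission
  imports Defs
begin

abbreviation Tpos :: "pmodel \<Rightarrow> nat set" where "Tpos M \<equiv> fst (fst M)"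
abbreviation Tneg :: "pmodel \<Rightarrow> nat set" where "Tneg M \<equiv> snd (fst M)"
abbreviation Ppos :: "pmodel \<Rightarrow> nat set" where "Ppos M \<equiv> fst (snd M)"
abbreviation Pneg :: "pmodel \<Rightarrow> nat set" where "Pneg M \<equiv> snd (snd M)"

definition consistent :: "pmodel \<Rightarrow> bool" where
  "consistent M \<longleftrightarrow> Tpos M \<inter> Tneg M = {} \<and> Ppos M \<inter> Pneg M = {}"

abbreviation decides :: "pmodel \<Rightarrow> fm \<Rightarrow> bool" where
  "decides M \<phi> \<equiv> sat M \<phi> \<or> sat M (neg \<phi>)"

lemma neg_neg [simp]: "neg (neg \<phi>) = \<phi>"
  by (induction \<phi>) auto

lemma neg_openF: "neg (openF k u \<phi>) = openF k u (neg \<phi>)"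
  by (induction \<phi> arbitrary: k) auto

lemma lcT_num [simp]: "lcT n (num m)"
  by (induction m) auto

lemma fvs_insert [simp]: "fvs (insert \<phi> S) = fvF \<phi> \<union> fvs S"
  by (auto simp: fvs_def)

lemma lcT_mono: "lcT n t \<Longrightarrow> n \<le> m \<Longrightarrow> lcT m t"
  by (induction t) auto

lemma lcT_openT: "lcT 0 u \<Longrightarrow> lcT k (openT k u t) = lcT (Suc k) t"
  by (induction t) (auto intro: lcT_mono)

lemma lcF_openF: "lcT 0 u \<Longrightarrow> lcF k (openF k u \<phi>) = lcF (Suc k) \<phi>"
  by (induction \<phi> arbitrary: k) (auto simp: lcT_openT)

lemma lcF_neg [simp]: "lcF k (neg \<phi>) = lcF k \<phi>"
  by (induction \<phi> arbitrary: k) auto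

lemma val_num [simp]: "val (num n) = n"
  by (induction n) auto

text \<open>Satisfaction under an assignment e of the free variables, where bs ! i is the value
  of the bound index Bv i. Since rule repl does not require t to be closed, an equation
  with a dangling bound index is read as false and its negation as true: this keeps Eq and
  Neq dual and makes repl sound.\<close>

primrec eval_tm :: "nat list \<Rightarrow> (nat \<Rightarrow> nat) \<Rightarrow> tm \<Rightarrow> nat" where
  "eval_tm bs e (Fv x) = e x"
| "eval_tm bs e (Bv i) = (if i < length bs then bs ! i else 0)"
| "eval_tm bs e Zero = 0"
| "eval_tm bs e (Sc t) = Suc (eval_tm bs e t)"
| "eval_tm bs e (Pl s t) = eval_tm bs e s + eval_tm bs e t"
| "eval_tm bs e (Tm s t) = eval_tm bs e s * eval_tm bs e t"

primrec sem :: "pmodel \<Rightarrow> (nat \<Rightarrow> nat) \<Rightarrow> nat list \<Rightarrow> fm \<Rightarrow> bool" where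
  "sem M e bs (Eq s t) = (lcT (length bs) s \<and> lcT (length bs) t \<and> eval_tm bs e s = eval_tm bs e t)"
| "sem M e bs (Neq s t) =
     (\<not> (lcT (length bs) s \<and> lcT (length bs) t) \<or> eval_tm bs e s \<noteq> eval_tm bs e t)"
| "sem M e bs (Tr t) = (eval_tm bs e t \<in> Tpos M)"
| "sem M e bs (NTr t) = (eval_tm bs e t \<in> Tneg M)"
| "sem M e bs (Pr t) = (eval_tm bs e t \<in> Ppos M)"
| "sem M e bs (NPr t) = (eval_tm bs e t \<in> Pneg M)"
| "sem M e bs (Conj a b) = (sem M e bs a \<and> sem M e bs b)"
| "sem M e bs (Disj a b) = (sem M e bs a \<or> sem M e bs b)"
| "sem M e bs (All a) = (\<forall>n. sem M e (n # bs) a)"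
| "sem M e bs (Ex a) = (\<exists>n. sem M e (n # bs) a)"

lemma eval_tm_closed: "lcT 0 u \<Longrightarrow> eval_tm bs e u = eval_tm bs' e u"
  by (induction u) auto

lemma eval_tm_openT:
  "lcT 0 u \<Longrightarrow> length bs = k \<Longrightarrow> eval_tm bs e (openT k u t) = eval_tm (bs @ [eval_tm [] e u]) e t"
  by (induction t) (auto simp: nth_append intro: eval_tm_closed)

lemma sem_openF:
  "lcT 0 u \<Longrightarrow> length bs = k \<Longrightarrow> sem M e bs (openF k u \<phi>) = sem M e (bs @ [eval_tm [] e u]) \<phi>"
  by (induction \<phi> arbitrary: k bs) (auto simp: eval_tm_openT lcT_openT)

lemma sem_openF0: "lcT 0 u \<Longrightarrow> sem M e [] (openF 0 u \<phi>) = sem M e [eval_tm [] e u] \<phi>"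
  using sem_openF[of u "[]" 0] by simp

lemma sat_eq_sem: "lcF 0 \<phi> \<Longrightarrow> sat M \<phi> = sem M (\<lambda>_. 0) [] \<phi>"
proof -
  have val: "eval_tm [] (\<lambda>_. 0) t = val t" for t
    by (induction t) auto
  have num: "eval_tm bs e (num n) = n" for bs e n
    by (induction n) auto
  show "lcF 0 \<phi> \<Longrightarrow> ?thesis"
    by (induction M \<phi> rule: sat.induct) (simp_all add: val num sem_openF0 lcF_openF)
qed

lemma sem_cong_fv: "(\<And>x. x \<in> fvF \<phi> \<Longrightarrow> e x = e' x) \<Longrightarrow> sem M e bs \<phi> = sem M e' bs \<phi>"
proof -
  have "(\<And>x. x \<in> fvT t \<Longrightarrow> e x = e' x) \<Longrightarrow> eval_tm bs e t = eval_tm bs e' t" for t bs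
    by (induction t) auto
  then show "(\<And>x. x \<in> fvF \<phi> \<Longrightarrow> e x = e' x) \<Longrightarrow> ?thesis"
    by (induction \<phi> arbitrary: bs) auto
qed

lemma sem_upd_fresh: "x \<notin> fvF \<phi> \<Longrightarrow> sem M (e(x := n)) bs \<phi> = sem M e bs \<phi>"
  by (rule sem_cong_fv) auto

lemma sem_upd_fresh_fvs: "x \<notin> fvs S \<Longrightarrow> \<phi> \<in> S \<Longrightarrow> sem M (e(x := n)) bs \<phi> = sem M e bs \<phi>"
  by (rule sem_upd_fresh) (auto simp: fvs_def)

lemma sem_neg_consistent: "consistent M \<Longrightarrow> sem M e bs \<phi> \<Longrightarrow> \<not> sem M e bs (neg \<phi>)"
  by (induction \<phi> arbitrary: bs) (auto simp: consistent_def)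

lemma sat_neg_consistent: "consistent M \<Longrightarrow> sat M \<phi> \<Longrightarrow> \<not> sat M (neg \<phi>)"
  by (induction M \<phi> rule: sat.induct) (auto simp: consistent_def neg_openF[symmetric])

theorem deriv_sound:
  "deriv G D \<Longrightarrow> consistent M \<Longrightarrow> \<forall>\<gamma>\<in>G. sem M e [] \<gamma> \<Longrightarrow> \<exists>\<delta>\<in>D. sem M e [] \<delta>"
proof (induction G D arbitrary: e rule: deriv.induct)
  case (weak G D G' D')
  then show ?case by blast
next
  case (negl G \<phi> D)
  then show ?case using sem_neg_consistent by blast
next
  case (allr G x \<phi> D)
  show ?case
  proof (rule ccontr)
    assume D_false: "\<not> (\<exists>\<delta>\<in>insert (All \<phi>) D. sem M e [] \<delta>)"
    have "sem M e [n] \<phi>" for n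
    proof -
      have "\<forall>\<gamma>\<in>G. sem M (e(x := n)) [] \<gamma>"
        using allr.prems allr.hyps sem_upd_fresh_fvs by blast
      with allr.IH allr.prems have "\<exists>\<delta>\<in>insert (openF 0 (Fv x) \<phi>) D. sem M (e(x := n)) [] \<delta>"
        by blast
      with D_false allr.hyps have "sem M (e(x := n)) [] (openF 0 (Fv x) \<phi>)"
        using sem_upd_fresh_fvs by blast
      then show ?thesis using allr.hyps by (simp add: sem_openF0 sem_upd_fresh)
    qed
    with D_false show False by simp
  qed
next
  case (exl x \<phi> G D)
  from exl.prems obtain n where n: "sem M e [n] \<phi>" by auto
  have "\<forall>\<gamma>\<in>insert (openF 0 (Fv x) \<phi>) G. sem M (e(x := n)) [] \<gamma>"
    using exl.prems exl.hyps n sem_upd_fresh_fvs by (auto simp: sem_openF0 sem_upd_fresh)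
  with exl.IH exl.prems have "\<exists>\<delta>\<in>D. sem M (e(x := n)) [] \<delta>" by blast
  then show ?case using exl.hyps sem_upd_fresh_fvs by blast
next
  case (repl G t \<phi> D s)
  show ?case
  proof (cases "lcT 0 t \<and> eval_tm [] e s = eval_tm [] e t")
    case True
    then have "sem M e [] (openF 0 t \<phi>) = sem M e [] (openF 0 s \<phi>)"
      using repl.hyps by (simp add: sem_openF0)
    with repl True show ?thesis by auto
  qed (use repl.hyps in auto)
next
  case (ind x \<phi> G D t)
  show ?case
  proof (rule ccontr)
    assume D_false: "\<not> (\<exists>\<delta>\<in>insert (openF 0 t \<phi>) D. sem M e [] \<delta>)"
    have "sem M e [n] \<phi>" for n
    proof (induction n)
      case 0
      then show ?case using ind.prems by (simp add: sem_openF0)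
    next
      case (Suc n)
      have "\<forall>\<gamma>\<in>insert (openF 0 (Fv x) \<phi>) G. sem M (e(x := n)) [] \<gamma>"
        using ind.prems ind.hyps Suc sem_upd_fresh_fvs by (auto simp: sem_openF0 sem_upd_fresh)
      with ind.IH ind.prems
      have "\<exists>\<delta>\<in>insert (openF 0 (Sc (Fv x)) \<phi>) D. sem M (e(x := n)) [] \<delta>"
        by blast
      with D_false ind.hyps have "sem M (e(x := n)) [] (openF 0 (Sc (Fv x)) \<phi>)"
        using sem_upd_fresh_fvs by blast
      then show ?case using ind.hyps by (simp add: sem_openF0 sem_upd_fresh)
    qed
    with D_false ind.hyps show False by (simp add: sem_openF0)
  qed
qed (auto simp: sem_openF0)

corollary deriv_sound_sat:
  assumes "deriv {\<phi>} {\<psi>}" "consistent M" "lcF 0 \<phi>" "lcF 0 \<psi>" "sat M \<phi>"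
  shows "sat M \<psi>"
  using deriv_sound[OF assms(1,2), of "\<lambda>_. 0"] assms(3-5) by (simp add: sat_eq_sem)

lemma base_paradoxical_undecided:
  assumes "consistent M" and "base_paradoxical gn \<psi>" and "gn \<psi> \<notin> Tpos M \<union> Tneg M"
  shows "\<not> decides M \<psi>"
proof -
  have "deriv {\<psi>} {NTr (num (gn \<psi>))}" and "deriv {neg \<psi>} {Tr (num (gn \<psi>))}"
    using assms(2) by (auto simp: base_paradoxical_def)
  moreover have "lcF 0 \<psi>"
    using assms(2) by (simp add: base_paradoxical_def sentence_def)
  ultimately have "sat M \<psi> \<Longrightarrow> gn \<psi> \<in> Tneg M" and "sat M (neg \<psi>) \<Longrightarrow> gn \<psi> \<in> Tpos M"
    using deriv_sound_sat[OF _ assms(1)] by fastforce+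
  with assms(3) show ?thesis by blast
qed

lemma less_eq_pmodel_iff:
  "(M::pmodel) \<le> N \<longleftrightarrow>
     Tpos M \<subseteq> Tpos N \<and> Tneg M \<subseteq> Tneg N \<and> Ppos M \<subseteq> Ppos N \<and> Pneg M \<subseteq> Pneg N"
  by (auto simp: less_eq_prod_def)

lemma components_Sup:
  "Tpos (Sup A) = (\<Union>M\<in>A. Tpos M)" "Tneg (Sup A) = (\<Union>M\<in>A. Tneg M)"
  "Ppos (Sup A) = (\<Union>M\<in>A. Ppos M)" "Pneg (Sup A) = (\<Union>M\<in>A. Pneg M)"
  by (simp_all add: fst_Sup snd_Sup image_image)

lemma components_GammaTP:
  "Tpos (GammaTP gn M) = codes gn (sat M)"
  "Tneg (GammaTP gn M) = codes gn (\<lambda>\<phi>. sat M (neg \<phi>))"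
  "Ppos (GammaTP gn M) = codes gn (satP gn M)"
  "Pneg (GammaTP gn M) = codes gn (decides M)"
  by (simp_all add: GammaTP_def)

lemma mem_codes_iff: "inj gn \<Longrightarrow> gn \<phi> \<in> codes gn Q \<longleftrightarrow> sentence \<phi> \<and> Q \<phi>"
  by (auto simp: codes_def dest: injD)

lemma codes_mono: "(\<And>\<phi>. Q \<phi> \<Longrightarrow> Q' \<phi>) \<Longrightarrow> codes gn Q \<subseteq> codes gn Q'"
  by (auto simp: codes_def)

lemma sat_mono: "M \<le> N \<Longrightarrow> sat M \<phi> \<Longrightarrow> sat N \<phi>"
  by (induction M \<phi> rule: sat.induct) (auto simp: less_eq_pmodel_iff)

lemma satP_mono: "M \<le> N \<Longrightarrow> satP gn M \<phi> \<Longrightarrow> satP gn N \<phi>"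
proof -
  assume "M \<le> N"
  then have "Tpos M \<subseteq> Tpos N" "Tneg M \<subseteq> Tneg N" "Ppos M \<subseteq> Ppos N"
    by (simp_all add: less_eq_pmodel_iff)
  then show "satP gn M \<phi> \<Longrightarrow> ?thesis"
    unfolding satP_def Let_def by (elim conjE disjE exE; simp; blast)
qed

lemma mono_GammaTP: "mono (GammaTP gn)"
proof
  fix M N :: pmodel
  assume le: "M \<le> N"
  show "GammaTP gn M \<le> GammaTP gn N"
    unfolding less_eq_pmodel_iff components_GammaTP
    by (intro conjI codes_mono) (auto intro: sat_mono[OF le] satP_mono[OF le])
qed

definition coherent :: "(fm \<Rightarrow> nat) \<Rightarrow> pmodel \<Rightarrow> bool" where
  "coherent gn M \<longleftrightarrow> consistent M \<and> Ppos M \<inter> (Tpos M \<union> Tneg M) = {}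
     \<and> (\<forall>\<psi>. base_paradoxical gn \<psi> \<longrightarrow> gn \<psi> \<notin> Tpos M \<union> Tneg M)"

definition paradoxes_undecided :: "(fm \<Rightarrow> nat) \<Rightarrow> pmodel \<Rightarrow> pmodel \<Rightarrow> bool" where
  "paradoxes_undecided gn W M \<longleftrightarrow> (\<forall>\<phi>. gn \<phi> \<in> Ppos W \<longrightarrow> \<not> decides M \<phi>)"

lemma satP_undecided:
  assumes inj: "inj gn" and M: "coherent gn M" and "W \<le> M" and "W \<le> GammaTP gn W"
    and undec: "paradoxes_undecided gn W M" and "satP gn W \<phi>"
  shows "\<not> decides M \<phi>"
proof -
  have cons: "consistent M"
    using M by (simp add: coherent_def)
  have P: "\<not> decides M a" if "gn a \<in> Ppos W" for a
    using undec that by (simp add: paradoxes_undecided_def)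
  have T: "sat M a \<and> \<not> sat M (neg a)" if "gn a \<in> Tpos W" for a
  proof -
    have "sat W a"
      using \<open>W \<le> GammaTP gn W\<close> that
      by (auto simp: less_eq_pmodel_iff components_GammaTP mem_codes_iff[OF inj])
    then show ?thesis
      using \<open>W \<le> M\<close> cons sat_mono sat_neg_consistent by blast
  qed
  have F: "sat M (neg a) \<and> \<not> sat M a" if "gn a \<in> Tneg W" for a
  proof -
    have "sat W (neg a)"
      using \<open>W \<le> GammaTP gn W\<close> that
      by (auto simp: less_eq_pmodel_iff components_GammaTP mem_codes_iff[OF inj])
    then show ?thesis
      using \<open>W \<le> M\<close> cons sat_mono sat_neg_consistent[of M "neg a"] by auto
  qed
  have lit: "n \<notin> Tpos M \<union> Tneg M" if "n \<in> Ppos W" for n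
    using M \<open>W \<le> M\<close> that by (auto simp: coherent_def less_eq_pmodel_iff)
  have bp: "\<not> decides M \<psi>" if "base_paradoxical gn \<psi>" for \<psi>
    using M that base_paradoxical_undecided by (auto simp: coherent_def)
  show ?thesis
    using \<open>satP gn W \<phi>\<close> unfolding satP_def Let_def
    by (elim conjE disjE exE) (auto simp: neg_openF[symmetric] dest: P T F lit bp)
qed

lemma paradoxes_undecided_GammaTP:
  assumes "inj gn" "coherent gn M" "W \<le> M" "W \<le> GammaTP gn W" "paradoxes_undecided gn W M"
  shows "paradoxes_undecided gn (GammaTP gn W) M"
  using satP_undecided[OF assms] assms(1)
  by (simp add: paradoxes_undecided_def components_GammaTP mem_codes_iff)

lemma paradoxes_undecided_Sup:
  "(\<And>W. W \<in> A \<Longrightarrow> paradoxes_undecided gn W M) \<Longrightarrow> paradoxes_undecided gn (Sup A) M"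
  by (auto simp: paradoxes_undecided_def components_Sup)

lemma chain_UN_disjoint:
  fixes X Y :: "'a::order \<Rightarrow> 'b set"
  assumes chain: "Complete_Partial_Order.chain (\<le>) A" and "mono X" "mono Y"
    and disj: "\<And>M. M \<in> A \<Longrightarrow> X M \<inter> Y M = {}"
  shows "(\<Union>M\<in>A. X M) \<inter> (\<Union>M\<in>A. Y M) = {}"
proof (rule equals0I)
  fix n assume "n \<in> (\<Union>M\<in>A. X M) \<inter> (\<Union>M\<in>A. Y M)"
  then obtain M N where "M \<in> A" "N \<in> A" "n \<in> X M" "n \<in> Y N" by blast
  have "M \<le> N \<or> N \<le> M"
    using chainD[OF chain \<open>M \<in> A\<close> \<open>N \<in> A\<close>] .
  then have "n \<in> X M \<inter> Y M \<or> n \<in> X N \<inter> Y N"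
    using \<open>n \<in> X M\<close> \<open>n \<in> Y N\<close> monoD[OF \<open>mono X\<close>, of M N] monoD[OF \<open>mono Y\<close>, of N M]
    by blast
  then show False
    using disj \<open>M \<in> A\<close> \<open>N \<in> A\<close> by blast
qed

lemma coherent_Sup:
  assumes chain: "Complete_Partial_Order.chain (\<le>) A" and coh: "\<And>M. M \<in> A \<Longrightarrow> coherent gn M"
  shows "coherent gn (Sup A)"
proof -
  have mono: "mono Tpos" "mono Tneg" "mono Ppos" "mono Pneg" "mono (\<lambda>M. Tpos M \<union> Tneg M)"
    by (auto intro!: monoI simp: less_eq_pmodel_iff)
  show ?thesis
    using coh unfolding coherent_def consistent_def components_Sup UN_Un_distrib[symmetric]
    by (intro conjI chain_UN_disjoint[OF chain] mono) auto
qed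

lemma paradoxes_undecided_iterates:
  assumes inj: "inj gn" and M: "coherent gn M"
  shows "W \<in> ccpo_class.iterates (GammaTP gn) \<Longrightarrow> W \<le> M \<Longrightarrow> paradoxes_undecided gn W M"
proof (induction W rule: ccpo_class.iterates.induct)
  case (step W)
  have "W \<le> GammaTP gn W"
    using iterates_le_f[OF step.hyps(1) mono_GammaTP] .
  moreover from this step.prems have "W \<le> M"
    by (rule order_trans)
  ultimately show ?case
    using paradoxes_undecided_GammaTP[OF inj M] step.IH by blast
next
  case (Sup A)
  then show ?case
    by (intro paradoxes_undecided_Sup) (meson Sup_upper order_trans)
qed

lemma coherent_GammaTP:
  assumes inj: "inj gn" and "M \<in> ccpo_class.iterates (GammaTP gn)" and M: "coherent gn M"
  shows "coherent gn (GammaTP gn M)"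
proof -
  have "M \<le> GammaTP gn M"
    using iterates_le_f[OF assms(2) mono_GammaTP] .
  moreover have "paradoxes_undecided gn M M"
    using paradoxes_undecided_iterates[OF inj M assms(2) order_refl] .
  ultimately have P_undecided: "satP gn M \<phi> \<Longrightarrow> \<not> decides M \<phi>" for \<phi>
    using satP_undecided[OF inj M order_refl] by blast
  have T_consistent: "sat M \<phi> \<Longrightarrow> \<not> sat M (neg \<phi>)" for \<phi>
    using M sat_neg_consistent by (simp add: coherent_def)
  have bp_undecided: "base_paradoxical gn \<psi> \<Longrightarrow> \<not> decides M \<psi>" for \<psi>
    using M base_paradoxical_undecided by (auto simp: coherent_def)
  show ?thesis
    unfolding coherent_def consistent_def components_GammaTP
    using P_undecided T_consistent bp_undecided by (auto simp: codes_def dest: injD[OF inj])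
qed

lemma coherent_iterates:
  assumes "inj gn"
  shows "M \<in> ccpo_class.iterates (GammaTP gn) \<Longrightarrow> coherent gn M"
proof (induction M rule: ccpo_class.iterates.induct)
  case (step M)
  then show ?case using coherent_GammaTP[OF assms] by blast
next
  case (Sup A)
  then show ?case using coherent_Sup by blast
qed

lemma coherent_lfp_GammaTP: "inj gn \<Longrightarrow> coherent gn (lfp (GammaTP gn))"
  using coherent_iterates iterates_fixp[OF mono_GammaTP] lfp_eq_fixp[OF mono_GammaTP] by metis

theorem mainTheorem8:
  fixes gn :: "fm \<Rightarrow> nat"
  assumes "inj gn"
  defines "TP \<equiv> lfp (GammaTP gn)"
  shows "fst (fst TP) \<inter> snd (fst TP) = {}
       \<and> fst (snd TP) \<inter> snd (snd TP) = {}
       \<and> (\<forall>\<phi>. sentence \<phi> \<longrightarrow> \<not> sat TP (Disj \<phi> (neg \<phi>)) \<or> \<not> satP gn TP \<phi>)"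
proof -
  have fixpoint: "GammaTP gn TP = TP"
    unfolding TP_def using lfp_fixpoint[OF mono_GammaTP] .
  have "consistent TP"
    using coherent_lfp_GammaTP[OF assms(1)] by (simp add: TP_def coherent_def)
  moreover have "gn \<phi> \<in> Ppos TP \<longleftrightarrow> satP gn TP \<phi>" and "gn \<phi> \<in> Pneg TP \<longleftrightarrow> decides TP \<phi>"
    if "sentence \<phi>" for \<phi>
    using that fixpoint components_GammaTP[of gn TP] by (metis mem_codes_iff[OF assms(1)])+
  ultimately show ?thesis
    unfolding consistent_def by auto
qed

end
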